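(* Let $f(x)=f_{d|d-1}(x_d|x_{d-1})\cdots f_{2|1}(x_2|x_1)f_1(x_1)$ be the density of a discrete-time Markov process $X=(X_1,\dots,X_d)$, and for $i=2,\dots,d$ let $m_i$ be the rank of $(t,s)\mapsto f_{i|i-1}(t|s)$, $m=\max_i m_i$. For an integer $k\ge0$ with $2k+1\le d$, let $\alpha=\{1,3,\dots,2k+1\}$. Then $\mathrm{rank}_\alpha(f)\le m_2m_3\cdots m_{2k+2}\le m^{2k+1}$ if $2k+1<d$, and $\mathrm{rank}_\alpha(f)\le m_2m_3\cdots m_{2k+1}\le m^{2k}$ if $2k+1=d$. *)

theory Defs
  imports "HOL-Analysis.Analysis" "HOL-Library.Extended_Nat"
begin

text \<open>Rank of a bivariate function g on A x B: the least r such that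
  g t s = sum_{j<r} u_j(t) v_j(s) for all t in A, s in B; infinity if no such
  finite decomposition exists.\<close>
definition frank :: "'a set \<Rightarrow> 'b set \<Rightarrow> ('a \<Rightarrow> 'b \<Rightarrow> real) \<Rightarrow> enat" where
  "frank A B g = Inf {enat r | r. \<exists>u v. \<forall>t\<in>A. \<forall>s\<in>B.
      g t s = (\<Sum>j<r. u j t * v j s)}"

definition merge_vars :: "nat set \<Rightarrow> (nat \<Rightarrow> 'a) \<Rightarrow> (nat \<Rightarrow> 'a) \<Rightarrow> nat \<Rightarrow> 'a" where
  "merge_vars \<alpha> y z = (\<lambda>i. if i \<in> \<alpha> then y i else z i)"

definition alpha_rank :: "nat \<Rightarrow> nat set \<Rightarrow> ((nat \<Rightarrow> 'a) \<Rightarrow> real) \<Rightarrow> enat" where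
  "alpha_rank d \<alpha> f = frank (PiE \<alpha> (\<lambda>_. UNIV)) (PiE ({1..d} - \<alpha>) (\<lambda>_. UNIV))
      (\<lambda>y z. f (merge_vars \<alpha> y z))"

end

theory Submission
  imports Defs
begin

text \<open>For \<open>\<alpha> = {1, 3, \<dots>, 2k+1}\<close> the variables \<open>x\<^sub>1, \<dots>, x\<^sub>n\<close> with \<open>n \<le> 2k+2\<close> alternate between
  \<open>\<alpha>\<close> and its complement, so each transition factor \<open>f\<^sub>i\<^sub>|\<^sub>i\<^sub>-\<^sub>1(x\<^sub>i|x\<^sub>i\<^sub>-\<^sub>1)\<close> with \<open>i \<le> n\<close> couples
  one variable of each side and has \<open>\<alpha>\<close>-rank at most \<open>m\<^sub>i\<close>. The remaining factors (those with
  \<open>i > n\<close>, which only involve the complement, and \<open>f\<^sub>1(x\<^sub>1)\<close>) form a separable function of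
  \<open>\<alpha>\<close>-rank one. Since rank is submultiplicative, \<open>rank\<^sub>\<alpha>(f) \<le> m\<^sub>2 \<cdots> m\<^sub>n\<close>.\<close>

lemma frank_le_card:
  assumes "finite J" and "\<forall>t\<in>A. \<forall>s\<in>B. g t s = (\<Sum>j\<in>J. u j t * v j s)"
  shows "frank A B g \<le> enat (card J)"
proof -
  obtain h where h: "bij_betw h {..<card J} J"
    using ex_bij_betw_nat_finite[OF assms(1)] by (auto simp: lessThan_atLeast0)
  have "\<forall>t\<in>A. \<forall>s\<in>B. g t s = (\<Sum>j<card J. u (h j) t * v (h j) s)"
    using assms(2) sum.reindex_bij_betw[OF h, of "\<lambda>j. u j _ * v j _"] by simp
  then show ?thesis
    unfolding frank_def by (intro Inf_lower) (auto intro!: exI[of _ "card J"])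
qed

lemma frank_enatE:
  assumes "frank A B g = enat r"
  obtains u v where "\<forall>t\<in>A. \<forall>s\<in>B. g t s = (\<Sum>j<r. u j t * v j s)"
proof -
  let ?R = "{enat r | r. \<exists>u v. \<forall>t\<in>A. \<forall>s\<in>B. g t s = (\<Sum>j<r. u j t * v j s)}"
  have "?R \<noteq> {}"
    using assms unfolding frank_def by (auto simp: Inf_enat_def split: if_splits)
  then obtain x where "x \<in> ?R"
    by blast
  then have "Inf ?R \<in> ?R"
    by (rule wellorder_InfI)
  then show ?thesis
    using assms that unfolding frank_def by auto
qed

lemma frank_eq_0_imp_zero:
  assumes "frank A B g = 0" and "t \<in> A" and "s \<in> B"
  shows "g t s = 0"
  using assms by (auto simp: zero_enat_def elim: frank_enatE)

lemma frank_zero: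
  assumes "\<forall>t\<in>A. \<forall>s\<in>B. g t s = 0"
  shows "frank A B g = 0"
  using frank_le_card[of "{}" A B g] assms by (simp add: zero_enat_def[symmetric])

lemma frank_separable_le_1:
  assumes "\<forall>t\<in>A. \<forall>s\<in>B. g t s = a t * b s"
  shows "frank A B g \<le> 1"
  using frank_le_card[of "{()}" A B g "\<lambda>_. a" "\<lambda>_. b"] assms by (simp add: one_enat_def)

lemma frank_mult_finite:
  assumes g: "\<forall>t\<in>A. \<forall>s\<in>B. g t s = g1 t s * g2 t s"
    and r: "frank A B g1 = enat r1" "frank A B g2 = enat r2"
  shows "frank A B g \<le> enat (r1 * r2)"
proof -
  obtain u1 v1 where d1: "\<forall>t\<in>A. \<forall>s\<in>B. g1 t s = (\<Sum>a<r1. u1 a t * v1 a s)"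
    using r(1) by (rule frank_enatE)
  obtain u2 v2 where d2: "\<forall>t\<in>A. \<forall>s\<in>B. g2 t s = (\<Sum>b<r2. u2 b t * v2 b s)"
    using r(2) by (rule frank_enatE)
  have "g t s = (\<Sum>(a, b)\<in>{..<r1} \<times> {..<r2}. (u1 a t * u2 b t) * (v1 a s * v2 b s))"
    if "t \<in> A" "s \<in> B" for t s
  proof -
    have "g t s = (\<Sum>a<r1. u1 a t * v1 a s) * (\<Sum>b<r2. u2 b t * v2 b s)"
      using g d1 d2 that by simp
    also have "\<dots> = (\<Sum>a<r1. \<Sum>b<r2. (u1 a t * u2 b t) * (v1 a s * v2 b s))"
      by (simp add: sum_product mult_ac)
    finally show ?thesis
      by (simp add: sum.cartesian_product)
  qed
  then have "frank A B g \<le> enat (card ({..<r1} \<times> {..<r2}))"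
    by (intro frank_le_card[where u = "\<lambda>(a, b) t. u1 a t * u2 b t" and v = "\<lambda>(a, b) s. v1 a s * v2 b s"])
       (auto simp: case_prod_beta)
  then show ?thesis
    by simp
qed

lemma frank_mult_le:
  assumes "\<forall>t\<in>A. \<forall>s\<in>B. g t s = g1 t s * g2 t s"
  shows "frank A B g \<le> frank A B g1 * frank A B g2"
proof -
  consider r1 r2 where "frank A B g1 = enat r1" "frank A B g2 = enat r2"
    | "frank A B g1 = 0 \<or> frank A B g2 = 0"
    | "frank A B g1 * frank A B g2 = \<infinity>"
    by (metis enat.exhaust imult_is_infinity)
  then show ?thesis
  proof cases
    case 1
    then show ?thesis
      using frank_mult_finite[OF assms] by simp
  next
    case 2
    then have "frank A B g = 0"
      using assms by (intro frank_zero) (auto dest: frank_eq_0_imp_zero)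
    then show ?thesis
      by simp
  qed simp
qed

lemma frank_prod_le:
  assumes "finite I" and "\<And>i. i \<in> I \<Longrightarrow> frank A B (F i) \<le> c i"
  shows "frank A B (\<lambda>t s. \<Prod>i\<in>I. F i t s) \<le> (\<Prod>i\<in>I. c i)"
  using assms
proof (induction I rule: finite_induct)
  case empty
  show ?case
    using frank_separable_le_1[of A B "\<lambda>_ _. 1" "\<lambda>_. 1" "\<lambda>_. 1"] by simp
next
  case (insert i I)
  have "frank A B (\<lambda>t s. \<Prod>j\<in>insert i I. F j t s)
        \<le> frank A B (F i) * frank A B (\<lambda>t s. \<Prod>j\<in>I. F j t s)"
    by (rule frank_mult_le) (use insert in auto)
  also have "\<dots> \<le> c i * (\<Prod>j\<in>I. c j)"
    by (rule mult_mono) (use insert in auto)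
  finally show ?case
    using insert by simp
qed

lemma frank_compose_le:
  assumes "p ` A \<subseteq> C" and "q ` B \<subseteq> D"
  shows "frank A B (\<lambda>y z. h (p y) (q z)) \<le> frank C D h"
proof (cases "frank C D h")
  case (enat r)
  then obtain u v where "\<forall>t\<in>C. \<forall>s\<in>D. h t s = (\<Sum>j<r. u j t * v j s)"
    by (rule frank_enatE)
  then have "frank A B (\<lambda>y z. h (p y) (q z)) \<le> enat (card {..<r})"
    using assms by (intro frank_le_card[where u = "\<lambda>j y. u j (p y)" and v = "\<lambda>j z. v j (q z)"]) blast+
  then show ?thesis
    using enat by simp
qed simp

lemma frank_transpose_le: "frank B A (\<lambda>s t. g t s) \<le> frank A B g"
proof (cases "frank A B g")
  case (enat r)
  then obtain u v where "\<forall>t\<in>A. \<forall>s\<in>B. g t s = (\<Sum>j<r. u j t * v j s)"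
    by (rule frank_enatE)
  then have "frank B A (\<lambda>s t. g t s) \<le> enat (card {..<r})"
    by (intro frank_le_card[where u = v and v = u]) (auto simp: mult.commute)
  then show ?thesis
    using enat by simp
qed simp

lemma frank_compose_transpose_le:
  assumes "p ` A \<subseteq> C" and "q ` B \<subseteq> D"
  shows "frank A B (\<lambda>y z. h (q z) (p y)) \<le> frank D C h"
  using frank_compose_le[OF assms, of "\<lambda>t s. h s t"] frank_transpose_le[of C D h] by simp

lemma prod_le_power_card:
  fixes c :: "'a \<Rightarrow> 'b::{ordered_comm_semiring, comm_semiring_1, canonically_ordered_monoid_add}"
  assumes "finite I" and "\<And>i. i \<in> I \<Longrightarrow> c i \<le> M"
  shows "(\<Prod>i\<in>I. c i) \<le> M ^ card I"
  using assms by (induction I rule: finite_induct) (auto intro!: mult_mono)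

lemma odd_image_iff: "(i::nat) \<in> (\<lambda>j. 2 * j + 1) ` {..k} \<longleftrightarrow> odd i \<and> i \<le> 2 * k + 1"
proof
  assume "odd i \<and> i \<le> 2 * k + 1"
  then show "i \<in> (\<lambda>j. 2 * j + 1) ` {..k}"
    by (intro rev_image_eqI[of "i div 2"]) auto
qed auto

lemma merge_vars_odd_image:
  "merge_vars ((\<lambda>j. 2 * j + 1) ` {..k}) y z i = (if odd i \<and> i \<le> 2 * k + 1 then y i else z i)"
  unfolding merge_vars_def odd_image_iff ..

lemma markov_density_split:
  fixes fc :: "nat \<Rightarrow> 'a \<Rightarrow> 'a \<Rightarrow> real"
  assumes "1 \<le> n" and "n \<le> d" and "\<forall>i\<in>{n+1..d}. x i = z i \<and> x (i - 1) = z (i - 1)"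
  shows "(\<Prod>i\<in>{2..d}. fc i (x i) (x (i - 1))) * f1 (x 1)
       = (\<Prod>i\<in>{2..n}. fc i (x i) (x (i - 1))) * ((\<Prod>i\<in>{n+1..d}. fc i (z i) (z (i - 1))) * f1 (x 1))"
proof -
  have "{2..d} = {2..n} \<union> {n+1..d}"
    using assms(1,2) by auto
  then have "(\<Prod>i\<in>{2..d}. fc i (x i) (x (i - 1)))
           = (\<Prod>i\<in>{2..n}. fc i (x i) (x (i - 1))) * (\<Prod>i\<in>{n+1..d}. fc i (x i) (x (i - 1)))"
    by (simp add: prod.union_disjoint)
  also have "(\<Prod>i\<in>{n+1..d}. fc i (x i) (x (i - 1))) = (\<Prod>i\<in>{n+1..d}. fc i (z i) (z (i - 1)))"
    using assms(3) by (intro prod.cong) auto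
  finally show ?thesis
    by (simp add: mult.assoc)
qed

lemma frank_transition_factor_le:
  fixes fc :: "'a \<Rightarrow> 'a \<Rightarrow> real"
  assumes "2 \<le> i" and "i \<le> 2 * k + 2"
  shows "frank A B (\<lambda>y z. fc (merge_vars ((\<lambda>j. 2 * j + 1) ` {..k}) y z i)
                            (merge_vars ((\<lambda>j. 2 * j + 1) ` {..k}) y z (i - 1)))
         \<le> frank UNIV UNIV fc"
proof (cases "odd i")
  case True
  with assms have "i \<le> 2 * k + 1"
    by presburger
  with True assms show ?thesis
    unfolding merge_vars_odd_image
    using frank_compose_le[of "\<lambda>y. y i" A UNIV "\<lambda>z. z (i - 1)" B UNIV fc] by simp
next
  case False
  with assms have "odd (i - 1)" and "i - 1 \<le> 2 * k + 1"
    by auto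
  with False assms show ?thesis
    unfolding merge_vars_odd_image
    using frank_compose_transpose_le[of "\<lambda>y. y (i - 1)" A UNIV "\<lambda>z. z i" B UNIV fc] by simp
qed

lemma alpha_rank_markov_le:
  fixes fc :: "nat \<Rightarrow> 'a \<Rightarrow> 'a \<Rightarrow> real" and f :: "(nat \<Rightarrow> 'a) \<Rightarrow> real"
  assumes f: "\<forall>x. f x = (\<Prod>i\<in>{2..d}. fc i (x i) (x (i - 1))) * f1 (x 1)"
    and n: "2 * k + 1 \<le> n" "n \<le> 2 * k + 2" "n \<le> d" "n = d \<or> n = 2 * k + 2"
  shows "alpha_rank d ((\<lambda>j. 2 * j + 1) ` {..k}) f \<le> (\<Prod>i\<in>{2..n}. frank UNIV UNIV (fc i))"
proof -
  define M :: "(nat \<Rightarrow> 'a) \<Rightarrow> (nat \<Rightarrow> 'a) \<Rightarrow> nat \<Rightarrow> 'a"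
    where "M = merge_vars ((\<lambda>j. 2 * j + 1) ` {..k})"
  define A where "A = PiE ((\<lambda>j. 2 * j + 1) ` {..k}) (\<lambda>_. UNIV :: 'a set)"
  define B where "B = PiE ({1..d} - (\<lambda>j. 2 * j + 1) ` {..k}) (\<lambda>_. UNIV :: 'a set)"
  have M_eq: "M y z i = (if odd i \<and> i \<le> 2 * k + 1 then y i else z i)" for y z i
    unfolding M_def by (rule merge_vars_odd_image)
  have tail_in_complement: "\<forall>i\<in>{n+1..d}. M y z i = z i \<and> M y z (i - 1) = z (i - 1)" for y z
    using n by (auto simp: M_eq)
  have "f (M y z) = (\<Prod>i\<in>{2..n}. fc i (M y z i) (M y z (i - 1)))
                    * ((\<Prod>i\<in>{n+1..d}. fc i (z i) (z (i - 1))) * f1 (y 1))" for y z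
    using markov_density_split[OF _ n(3) tail_in_complement] f n(1) by (simp add: M_eq)
  then have "alpha_rank d ((\<lambda>j. 2 * j + 1) ` {..k}) f
      \<le> frank A B (\<lambda>y z. \<Prod>i\<in>{2..n}. fc i (M y z i) (M y z (i - 1)))
        * frank A B (\<lambda>y z. (\<Prod>i\<in>{n+1..d}. fc i (z i) (z (i - 1))) * f1 (y 1))"
    unfolding alpha_rank_def A_def B_def M_def by (intro frank_mult_le) simp
  also have "\<dots> \<le> (\<Prod>i\<in>{2..n}. frank UNIV UNIV (fc i)) * 1"
  proof (rule mult_mono)
    show "frank A B (\<lambda>y z. \<Prod>i\<in>{2..n}. fc i (M y z i) (M y z (i - 1)))
          \<le> (\<Prod>i\<in>{2..n}. frank UNIV UNIV (fc i))"
      using n(2) unfolding M_def by (intro frank_prod_le frank_transition_factor_le) auto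
    show "frank A B (\<lambda>y z. (\<Prod>i\<in>{n+1..d}. fc i (z i) (z (i - 1))) * f1 (y 1)) \<le> 1"
      by (rule frank_separable_le_1[where a = "\<lambda>y. f1 (y 1)" and b = "\<lambda>z. \<Prod>i\<in>{n+1..d}. fc i (z i) (z (i - 1))"])
         (simp add: mult.commute)
  qed simp_all
  finally show ?thesis
    by simp
qed

theorem mainTheorem9:
  fixes d k :: nat
    and f1 :: "real \<Rightarrow> real"
    and fc :: "nat \<Rightarrow> real \<Rightarrow> real \<Rightarrow> real"
    and f :: "(nat \<Rightarrow> real) \<Rightarrow> real"
    and m :: "nat \<Rightarrow> enat" and mmax :: enat
  assumes f1_nonneg: "\<forall>t. f1 t \<ge> 0"
    and f1_density: "(f1 has_integral 1) UNIV"
    and fc_nonneg: "\<forall>i\<in>{2..d}. \<forall>t s. fc i t s \<ge> 0"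
    and fc_density: "\<forall>i\<in>{2..d}. \<forall>s. ((\<lambda>t. fc i t s) has_integral 1) UNIV"
    and f_def: "\<forall>x. f x = (\<Prod>i\<in>{2..d}. fc i (x i) (x (i - 1))) * f1 (x 1)"
    and m_def: "\<forall>i. m i = frank UNIV UNIV (fc i)"
    and mmax_def: "mmax = Max (m ` {2..d})"
    and kd: "2 * k + 1 \<le> d"
  shows "(2 * k + 1 < d \<longrightarrow>
            alpha_rank d ((\<lambda>j. 2 * j + 1) ` {..k}) f \<le> (\<Prod>i\<in>{2..2*k+2}. m i)
          \<and> (\<Prod>i\<in>{2..2*k+2}. m i) \<le> mmax ^ (2 * k + 1))
       \<and> (2 * k + 1 = d \<longrightarrow>
            alpha_rank d ((\<lambda>j. 2 * j + 1) ` {..k}) f \<le> (\<Prod>i\<in>{2..2*k+1}. m i)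
          \<and> (\<Prod>i\<in>{2..2*k+1}. m i) \<le> mmax ^ (2 * k))"
proof -
  have rank_le: "alpha_rank d ((\<lambda>j. 2 * j + 1) ` {..k}) f \<le> (\<Prod>i\<in>{2..n}. m i)"
    if "2 * k + 1 \<le> n" "n \<le> 2 * k + 2" "n \<le> d" "n = d \<or> n = 2 * k + 2" for n
    using alpha_rank_markov_le[OF f_def that] m_def by simp
  have power_le: "(\<Prod>i\<in>{2..n}. m i) \<le> mmax ^ (n - 1)" if "n \<le> d" for n
  proof -
    have "(\<Prod>i\<in>{2..n}. m i) \<le> mmax ^ card {2..n}"
      using that unfolding mmax_def by (intro prod_le_power_card Max_ge) auto
    then show ?thesis
      by simp
  qed
  show ?thesis
    using rank_le[of "2 * k + 2"] rank_le[of "2 * k + 1"] power_le[of "2 * k + 2"] power_le[of "2 * k + 1"]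
    by auto
qed

end
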